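(* Fix an integer $m\ge 1$, a stochastic matrix $p\in\mathbb{R}^{m\times m}$ of an ergodic Markov chain on $[m]$ with equilibrium distribution $\pi$, constants $\alpha_1,\dots,\alpha_m>0$ with $\sum_i\alpha_i=1$, and $\lambda>0$. For every $n$ let $\sigma_n:[n]\to[m]$ have nonempty fibres $\mathcal{V}_k=\sigma_n^{-1}(k)$ with $\#\mathcal{V}_k=\alpha_kn+o(n)$, and let $X_1,\dots,X_\ell$, $\ell=\lambda n^2+o(n^2)$, be a sample path of the block Markov chain on $[n]$ with transition matrix $P_{ij}=p_{\sigma_n(i)\sigma_n(j)}/\#\mathcal{V}_{\sigma_n(j)}$, started from its equilibrium distribution $\Pi_X$. With $\hat N_{ij}=\sum_{t=1}^{\ell-1}\mathbf 1\{X_t=i,X_{t+1}=j\}$ and $$\hat Q=\operatorname{diag}\big((\ell+1)\Pi_X\big)^{-1/2}\big(\hat N-\mathbb{E}[\hat N]\big)\operatorname{diag}\big((\ell+1)\Pi_X\big)^{-1/2},$$ it holds as $n\to\infty$ that $$\max_{i,j\in[n]}\Big|\,n^2\operatorname{Var}[\hat Q_{ij}]-\lambda^{-1}\pi(\sigma_n(j))^{-1}p_{\sigma_n(i)\sigma_n(j)}\Big|=o(1).$$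
   Context: $[n]=\{1,\dots,n\}$; $\operatorname{diag}(v)$ is the diagonal matrix with diagonal $v$. *)

theory Defs
  imports Complex_Main "HOL-Library.FuncSet" "HOL-Library.Landau_Symbols"
begin

(* States of the small chain are {1..m}; matrices are functions nat => nat => real. *)

fun mpow :: "nat \<Rightarrow> (nat \<Rightarrow> nat \<Rightarrow> real) \<Rightarrow> nat \<Rightarrow> nat \<Rightarrow> nat \<Rightarrow> real" where
  "mpow m p 0 i j = (if i = j then 1 else 0)"
| "mpow m p (Suc k) i j = (\<Sum>l\<in>{1..m}. mpow m p k i l * p l j)"

definition stochastic :: "nat \<Rightarrow> (nat \<Rightarrow> nat \<Rightarrow> real) \<Rightarrow> bool" where
  "stochastic m p \<longleftrightarrow> (\<forall>i\<in>{1..m}. \<forall>j\<in>{1..m}. p i j \<ge> 0) \<and>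
                        (\<forall>i\<in>{1..m}. (\<Sum>j\<in>{1..m}. p i j) = 1)"

definition irreducible_chain :: "nat \<Rightarrow> (nat \<Rightarrow> nat \<Rightarrow> real) \<Rightarrow> bool" where
  "irreducible_chain m p \<longleftrightarrow> (\<forall>i\<in>{1..m}. \<forall>j\<in>{1..m}. \<exists>k. mpow m p k i j > 0)"

definition aperiodic_chain :: "nat \<Rightarrow> (nat \<Rightarrow> nat \<Rightarrow> real) \<Rightarrow> bool" where
  "aperiodic_chain m p \<longleftrightarrow> (\<forall>i\<in>{1..m}. Gcd {k. k > 0 \<and> mpow m p k i i > 0} = 1)"

definition ergodic_chain :: "nat \<Rightarrow> (nat \<Rightarrow> nat \<Rightarrow> real) \<Rightarrow> bool" where
  "ergodic_chain m p \<longleftrightarrow> stochastic m p \<and> irreducible_chain m p \<and> aperiodic_chain m p"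

definition stationary_dist :: "nat \<Rightarrow> (nat \<Rightarrow> nat \<Rightarrow> real) \<Rightarrow> (nat \<Rightarrow> real) \<Rightarrow> bool" where
  "stationary_dist m p \<pi> \<longleftrightarrow> (\<forall>i\<in>{1..m}. \<pi> i \<ge> 0) \<and> (\<Sum>i\<in>{1..m}. \<pi> i) = 1 \<and>
      (\<forall>j\<in>{1..m}. (\<Sum>i\<in>{1..m}. \<pi> i * p i j) = \<pi> j)"

definition block_P :: "nat \<Rightarrow> (nat \<Rightarrow> nat) \<Rightarrow> (nat \<Rightarrow> nat \<Rightarrow> real) \<Rightarrow> nat \<Rightarrow> nat \<Rightarrow> real" where
  "block_P n \<sigma> p i j = p (\<sigma> i) (\<sigma> j) / real (card {v\<in>{1..n}. \<sigma> v = \<sigma> j})"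

definition paths :: "nat \<Rightarrow> nat \<Rightarrow> (nat \<Rightarrow> nat) set" where
  "paths n l = ({1..l} \<rightarrow>\<^sub>E {1..n})"

definition path_weight :: "nat \<Rightarrow> (nat \<Rightarrow> nat \<Rightarrow> real) \<Rightarrow> (nat \<Rightarrow> real) \<Rightarrow> (nat \<Rightarrow> nat) \<Rightarrow> real" where
  "path_weight l P PX x = PX (x 1) * (\<Prod>t\<in>{1..<l}. P (x t) (x (Suc t)))"

definition expect :: "nat \<Rightarrow> nat \<Rightarrow> (nat \<Rightarrow> nat \<Rightarrow> real) \<Rightarrow> (nat \<Rightarrow> real) \<Rightarrow> ((nat \<Rightarrow> nat) \<Rightarrow> real) \<Rightarrow> real" where
  "expect n l P PX f = (\<Sum>x\<in>paths n l. path_weight l P PX x * f x)"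

definition variance :: "nat \<Rightarrow> nat \<Rightarrow> (nat \<Rightarrow> nat \<Rightarrow> real) \<Rightarrow> (nat \<Rightarrow> real) \<Rightarrow> ((nat \<Rightarrow> nat) \<Rightarrow> real) \<Rightarrow> real" where
  "variance n l P PX f = expect n l P PX (\<lambda>x. (f x - expect n l P PX f)^2)"

definition Ncount :: "nat \<Rightarrow> nat \<Rightarrow> nat \<Rightarrow> (nat \<Rightarrow> nat) \<Rightarrow> real" where
  "Ncount l i j x = real (card {t\<in>{1..<l}. x t = i \<and> x (Suc t) = j})"

definition Qhat :: "nat \<Rightarrow> nat \<Rightarrow> (nat \<Rightarrow> nat \<Rightarrow> real) \<Rightarrow> (nat \<Rightarrow> real) \<Rightarrow> nat \<Rightarrow> nat \<Rightarrow> (nat \<Rightarrow> nat) \<Rightarrow> real" where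
  "Qhat n l P PX i j x =
     (Ncount l i j x - expect n l P PX (Ncount l i j)) /
     (sqrt ((real l + 1) * PX i) * sqrt ((real l + 1) * PX j))"

end

theory Submission
  imports Defs
begin

text \<open>
  The count \<open>N\<close> of \<open>i\<close>-to-\<open>j\<close> transitions is a sum of \<open>\<ell> - 1\<close> indicators. By the Markov
  property the indicators at times \<open>t < s\<close> are jointly active with probability
  \<open>q P^(s-t-1)(j,i) P(i,j)\<close>, where \<open>q = \<Pi>\<^sub>X(i) P(i,j)\<close>; as \<open>P^k(j,i) \<rightarrow> \<Pi>\<^sub>X(i)\<close>, this gives
  \<open>|Var N - (\<ell> - 1) q| \<le> (\<ell> - 1) q P(i,j) (\<Pi>\<^sub>X(i) + 2 \<Sum>\<^sub>k |P^k(j,i) - \<Pi>\<^sub>X(i)|)\<close>.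
  For the block chain \<open>\<Pi>\<^sub>X(i) = \<pi>(\<sigma> i) / #V(\<sigma> i)\<close> and, for \<open>k \<ge> 1\<close>,
  \<open>P^k(j,i) - \<Pi>\<^sub>X(i) = (p^k(\<sigma> j, \<sigma> i) - \<pi>(\<sigma> i)) / #V(\<sigma> i)\<close>, so the sum over \<open>k\<close> stays
  bounded: Doeblin's contraction makes \<open>p^k\<close> converge geometrically to \<open>\<pi>\<close>. After normalisation,
  \<open>n\<^sup>2 Var Q(i,j)\<close> is \<open>n\<^sup>2 (\<ell> - 1) / (\<ell> + 1)\<^sup>2 \<cdot> p(\<sigma> i, \<sigma> j) / \<pi>(\<sigma> j)\<close> up to a relative
  error \<open>O(P(i,j)) = O(1 / #V(\<sigma> j))\<close>, which vanishes, and the prefactor tends to \<open>1 / \<lambda>\<close>.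
\<close>

section \<open>Powers of stochastic matrices\<close>

lemma mpow_0 [simp]: "mpow m p 0 i j = of_bool (i = j)"
  by simp

declare mpow.simps(1) [simp del]

lemma mpow_1: "i \<in> {1..m} \<Longrightarrow> mpow m p 1 i j = p i j"
  by simp

lemma stochastic_le_1:
  assumes "stochastic m p" "i \<in> {1..m}" "j \<in> {1..m}"
  shows "p i j \<le> 1"
proof -
  have "p i j \<le> (\<Sum>j\<in>{1..m}. p i j)"
    using assms unfolding stochastic_def by (intro member_le_sum) auto
  then show ?thesis using assms unfolding stochastic_def by simp
qed

lemma mpow_nonneg:
  assumes "stochastic m p" "j \<in> {1..m}"
  shows "0 \<le> mpow m p k i j"
  using assms(2)
proof (induction k arbitrary: j)
  case (Suc k)
  then show ?case
    using assms(1) unfolding stochastic_def by (auto intro!: sum_nonneg)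
qed simp

lemma mpow_row_sum:
  assumes "stochastic m p" "i \<in> {1..m}"
  shows "(\<Sum>j\<in>{1..m}. mpow m p k i j) = 1"
proof (induction k)
  case (Suc k)
  have "(\<Sum>j\<in>{1..m}. mpow m p (Suc k) i j) = (\<Sum>l\<in>{1..m}. mpow m p k i l * (\<Sum>j\<in>{1..m}. p l j))"
    by (simp add: sum_distrib_left) (rule sum.swap)
  also have "\<dots> = (\<Sum>l\<in>{1..m}. mpow m p k i l)"
    using assms(1) unfolding stochastic_def by simp
  finally show ?case using Suc by simp
qed (use assms(2) in simp)

lemma mpow_add:
  assumes "j \<in> {1..m}"
  shows "mpow m p (a + b) i j = (\<Sum>l\<in>{1..m}. mpow m p a i l * mpow m p b l j)"
  using assms
proof (induction b arbitrary: j)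
  case (Suc b)
  have "mpow m p (a + Suc b) i j = (\<Sum>l'\<in>{1..m}. (\<Sum>l\<in>{1..m}. mpow m p a i l * mpow m p b l l') * p l' j)"
    using Suc.IH by simp
  also have "\<dots> = (\<Sum>l\<in>{1..m}. mpow m p a i l * mpow m p (Suc b) l j)"
    by (simp add: sum_distrib_left sum_distrib_right mult.assoc) (rule sum.swap)
  finally show ?case .
qed simp

lemma mpow_mult_le_mpow_add:
  assumes "stochastic m p" "j \<in> {1..m}" "l \<in> {1..m}"
  shows "mpow m p a i l * mpow m p b l j \<le> mpow m p (a + b) i j"
  unfolding mpow_add[OF assms(2)]
  by (rule member_le_sum) (use assms mpow_nonneg in auto)

lemma stationary_dist_mpow:
  assumes "stationary_dist m p \<pi>" "j \<in> {1..m}"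
  shows "(\<Sum>i\<in>{1..m}. \<pi> i * mpow m p k i j) = \<pi> j"
  using assms(2)
proof (induction k arbitrary: j)
  case (Suc k)
  have "(\<Sum>i\<in>{1..m}. \<pi> i * mpow m p (Suc k) i j)
      = (\<Sum>l\<in>{1..m}. (\<Sum>i\<in>{1..m}. \<pi> i * mpow m p k i l) * p l j)"
    by (simp add: sum_distrib_left sum_distrib_right mult.assoc) (rule sum.swap)
  also have "\<dots> = \<pi> j"
    using Suc assms(1) unfolding stationary_dist_def by simp
  finally show ?case .
qed simp

section \<open>Aperiodicity\<close>

lemma add_closed_mult_mem:
  fixes S :: "nat set"
  assumes "\<And>a b. a \<in> S \<Longrightarrow> b \<in> S \<Longrightarrow> a + b \<in> S" "s \<in> S" "j \<ge> 1"
  shows "j * s \<in> S"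
  using assms(3) by (induction j rule: dec_induct) (use assms(1,2) in \<open>auto simp: add.commute\<close>)

text \<open>The least positive gap \<open>d\<close> between two elements of \<open>S \<union> {0}\<close> divides every
  element of \<open>S\<close>, by the Euclidean algorithm; hence \<open>d = 1\<close>.\<close>

lemma add_closed_Gcd_eq_1_consecutive:
  fixes S :: "nat set"
  assumes add: "\<And>a b. a \<in> S \<Longrightarrow> b \<in> S \<Longrightarrow> a + b \<in> S" and gcd: "Gcd S = 1"
  shows "\<exists>b\<in>insert 0 S. b + 1 \<in> S"
proof -
  define S0 where "S0 = insert 0 S"
  have add0: "a + b \<in> S0" if "a \<in> S0" "b \<in> S0" for a b
    using that add unfolding S0_def by auto
  have mult0: "j * s \<in> S0" if "s \<in> S0" for j s
    using add_closed_mult_mem[of S0 s j, OF add0] that by (cases "j = 0") (auto simp: S0_def)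
  define D where "D = {c. c > 0 \<and> (\<exists>b\<in>S0. b + c \<in> S0)}"
  obtain s where "s \<in> S" "s \<noteq> 0"
    using gcd Gcd_0_iff[of S] by auto
  then have "s \<in> D" unfolding D_def S0_def by auto
  define d where "d = (LEAST c. c \<in> D)"
  have "d \<in> D" unfolding d_def by (rule LeastI) fact
  then obtain b where b: "b \<in> S0" "b + d \<in> S0" and "d > 0" unfolding D_def by auto
  have "d dvd s" if "s \<in> S" for s
  proof (rule ccontr)
    assume "\<not> d dvd s"
    define q r where "q = s div d" and "r = s mod d"
    have "r > 0" "r < d" using \<open>\<not> d dvd s\<close> \<open>d > 0\<close> unfolding r_def by (auto simp: dvd_eq_mod_eq_0)
    have "s \<in> S0" using that unfolding S0_def by simp
    then have "q * (b + d) \<in> S0" "s + q * b \<in> S0"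
      using mult0 b add0 by auto
    moreover have "s + q * b = q * (b + d) + r"
      unfolding q_def r_def by (simp add: algebra_simps)
    ultimately have "r \<in> D" unfolding D_def using \<open>r > 0\<close> by force
    then show False using \<open>r < d\<close> unfolding d_def by (meson Least_le not_le)
  qed
  then have "d dvd Gcd S" by (rule Gcd_greatest)
  then have "d = 1" using gcd by simp
  then have "b + 1 \<in> S" using b(2) unfolding S0_def by simp
  then show ?thesis using b(1) unfolding S0_def by blast
qed

lemma add_closed_Gcd_eq_1_contains_all_large:
  fixes S :: "nat set"
  assumes add: "\<And>a b. a \<in> S \<Longrightarrow> b \<in> S \<Longrightarrow> a + b \<in> S" and "Gcd S = 1"
  shows "\<exists>N. \<forall>k\<ge>N. k \<in> S"
proof -
  obtain b where b: "b \<in> insert 0 S" "b + 1 \<in> S"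
    using add_closed_Gcd_eq_1_consecutive[OF assms] by blast
  show ?thesis
  proof (cases "b = 0")
    case True
    then have "k \<in> S" if "k \<ge> 1" for k
      using add_closed_mult_mem[OF add b(2) that] by simp
    then show ?thesis by blast
  next
    case False
    then have bS: "b \<in> S" using b(1) by simp
    have "k \<in> S" if "k \<ge> b * b" for k
    proof -
      define q r where "q = k div b" and "r = k mod b"
      have "r < b" using False unfolding r_def by simp
      have "b * b div b \<le> k div b" using that by (rule div_le_mono)
      then have "b \<le> q" using False unfolding q_def by simp
      have "k = q * b + r" unfolding q_def r_def by simp
      then have k: "k = (q - r) * b + r * (b + 1)"
        using \<open>r < b\<close> \<open>b \<le> q\<close> by (simp add: algebra_simps diff_mult_distrib)
      have qr: "(q - r) * b \<in> S"
        using add_closed_mult_mem[OF add bS, of "q - r"] \<open>r < b\<close> \<open>b \<le> q\<close> by simp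
      show ?thesis
      proof (cases "r = 0")
        case True
        then show ?thesis using k qr by simp
      next
        case False
        then have "r * (b + 1) \<in> S" using add_closed_mult_mem[OF add b(2), of r] by simp
        then show ?thesis using k qr add by metis
      qed
    qed
    then show ?thesis by blast
  qed
qed

lemma aperiodic_mpow_diag_eventually_pos:
  assumes "stochastic m p" "aperiodic_chain m p" "i \<in> {1..m}"
  shows "\<exists>N. \<forall>k\<ge>N. 0 < mpow m p k i i"
proof -
  define S where "S = {k. k > 0 \<and> mpow m p k i i > 0}"
  have "a + b \<in> S" if "a \<in> S" "b \<in> S" for a b
  proof -
    have "0 < mpow m p a i i * mpow m p b i i" using that unfolding S_def by simp
    also have "\<dots> \<le> mpow m p (a + b) i i" using mpow_mult_le_mpow_add assms(1,3) by blast
    finally show ?thesis using that unfolding S_def by simp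
  qed
  moreover have "Gcd S = 1" using assms(2,3) unfolding aperiodic_chain_def S_def by simp
  ultimately obtain N where "\<forall>k\<ge>N. k \<in> S" using add_closed_Gcd_eq_1_contains_all_large by blast
  then show ?thesis unfolding S_def by blast
qed

lemma ergodic_mpow_uniformly_pos:
  assumes erg: "ergodic_chain m p" and "m \<ge> 1"
  shows "\<exists>K \<delta>. K \<ge> 1 \<and> \<delta> > 0 \<and> (\<forall>i\<in>{1..m}. \<forall>j\<in>{1..m}. \<delta> \<le> mpow m p K i j)"
proof -
  have st: "stochastic m p" using erg unfolding ergodic_chain_def by simp
  obtain N where N: "\<And>i k. i \<in> {1..m} \<Longrightarrow> N i \<le> k \<Longrightarrow> 0 < mpow m p k i i"
    using aperiodic_mpow_diag_eventually_pos[OF st] erg unfolding ergodic_chain_def by metis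
  obtain r where r: "\<And>i j. i \<in> {1..m} \<Longrightarrow> j \<in> {1..m} \<Longrightarrow> 0 < mpow m p (r i j) i j"
    using erg unfolding ergodic_chain_def irreducible_chain_def by metis
  define K where "K = 1 + (\<Sum>i\<in>{1..m}. N i) + (\<Sum>i\<in>{1..m}. \<Sum>j\<in>{1..m}. r i j)"
  have pos: "0 < mpow m p K i j" if i: "i \<in> {1..m}" and j: "j \<in> {1..m}" for i j
  proof -
    have "N i \<le> (\<Sum>i\<in>{1..m}. N i)" "r i j \<le> (\<Sum>j\<in>{1..m}. r i j)"
      "(\<Sum>j\<in>{1..m}. r i j) \<le> (\<Sum>i\<in>{1..m}. \<Sum>j\<in>{1..m}. r i j)"
      using i j by (intro member_le_sum; simp)+
    then have "N i \<le> K - r i j" and K: "K = (K - r i j) + r i j" unfolding K_def by linarith+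
    then have "0 < mpow m p (K - r i j) i i * mpow m p (r i j) i j" using N r i j by simp
    also have "\<dots> \<le> mpow m p K i j" using mpow_mult_le_mpow_add[OF st j i] K by metis
    finally show ?thesis .
  qed
  define \<delta> where "\<delta> = Min ((\<lambda>(i, j). mpow m p K i j) ` ({1..m} \<times> {1..m}))"
  have "\<delta> > 0" unfolding \<delta>_def using pos \<open>m \<ge> 1\<close> by (subst Min_gr_iff) auto
  moreover have "\<forall>i\<in>{1..m}. \<forall>j\<in>{1..m}. \<delta> \<le> mpow m p K i j"
    unfolding \<delta>_def by (auto intro!: Min_le)
  moreover have "K \<ge> 1" unfolding K_def by simp
  ultimately show ?thesis by blast
qed

section \<open>Geometric ergodicity\<close>

definition vecmat :: "nat \<Rightarrow> (nat \<Rightarrow> real) \<Rightarrow> (nat \<Rightarrow> nat \<Rightarrow> real) \<Rightarrow> nat \<Rightarrow> real" where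
  "vecmat m v A j = (\<Sum>i\<in>{1..m}. v i * A i j)"

definition norm1 :: "nat \<Rightarrow> (nat \<Rightarrow> real) \<Rightarrow> real" where
  "norm1 m v = (\<Sum>i\<in>{1..m}. \<bar>v i\<bar>)"

lemma abs_le_norm1: "i \<in> {1..m} \<Longrightarrow> \<bar>v i\<bar> \<le> norm1 m v"
  unfolding norm1_def by (rule member_le_sum) auto

lemma doeblin_contraction:
  assumes "\<forall>i\<in>{1..m}. \<forall>j\<in>{1..m}. \<delta> \<le> A i j" "\<And>i. i \<in> {1..m} \<Longrightarrow> (\<Sum>j\<in>{1..m}. A i j) = 1"
    and "(\<Sum>i\<in>{1..m}. v i) = 0"
  shows "norm1 m (vecmat m v A) \<le> (1 - real m * \<delta>) * norm1 m v"
proof -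
  have "norm1 m (vecmat m v A) \<le> (\<Sum>j\<in>{1..m}. \<Sum>i\<in>{1..m}. \<bar>v i\<bar> * (A i j - \<delta>))"
    unfolding norm1_def vecmat_def
  proof (rule sum_mono)
    fix j assume j: "j \<in> {1..m}"
    have "(\<Sum>i\<in>{1..m}. v i * A i j) = (\<Sum>i\<in>{1..m}. v i * (A i j - \<delta>)) + (\<Sum>i\<in>{1..m}. v i) * \<delta>"
      by (simp add: algebra_simps sum.distrib sum_distrib_left sum_distrib_right sum_subtractf)
    then have "\<bar>\<Sum>i\<in>{1..m}. v i * A i j\<bar> = \<bar>\<Sum>i\<in>{1..m}. v i * (A i j - \<delta>)\<bar>"
      using assms(3) by simp
    also have "\<dots> \<le> (\<Sum>i\<in>{1..m}. \<bar>v i * (A i j - \<delta>)\<bar>)" by (rule sum_abs)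
    also have "\<dots> = (\<Sum>i\<in>{1..m}. \<bar>v i\<bar> * (A i j - \<delta>))"
      using assms(1) j by (intro sum.cong) (auto simp: abs_mult)
    finally show "\<bar>\<Sum>i\<in>{1..m}. v i * A i j\<bar> \<le> (\<Sum>i\<in>{1..m}. \<bar>v i\<bar> * (A i j - \<delta>))" .
  qed
  also have "\<dots> = (\<Sum>i\<in>{1..m}. \<bar>v i\<bar> * (\<Sum>j\<in>{1..m}. A i j - \<delta>))"
    by (subst sum.swap) (simp add: sum_distrib_left)
  also have "\<dots> = (1 - real m * \<delta>) * norm1 m v"
    using assms(2) unfolding norm1_def by (simp add: sum_subtractf sum_distrib_left mult.commute)
  finally show ?thesis .
qed

lemma doeblin_rate_bounds:
  assumes "stochastic m p" "m \<ge> 1" "\<forall>i\<in>{1..m}. \<forall>j\<in>{1..m}. \<delta> \<le> mpow m p K i j" "\<delta> > 0"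
  shows "0 \<le> 1 - real m * \<delta>" "1 - real m * \<delta> < 1"
proof -
  have "(\<Sum>j\<in>{1..m}. \<delta>) \<le> (\<Sum>j\<in>{1..m}. mpow m p K 1 j)"
    using assms(2,3) by (intro sum_mono) auto
  then show "0 \<le> 1 - real m * \<delta>" using mpow_row_sum[OF assms(1)] assms(2) by simp
  show "1 - real m * \<delta> < 1" using assms(2,4) by simp
qed

lemma stationary_dist_unique:
  assumes erg: "ergodic_chain m p" and "m \<ge> 1"
    and stat: "stationary_dist m p \<pi>" and stat': "stationary_dist m p \<pi>'" and a: "a \<in> {1..m}"
  shows "\<pi>' a = \<pi> a"
proof -
  have st: "stochastic m p" using erg unfolding ergodic_chain_def by simp
  obtain K \<delta> where "\<delta> > 0" and K: "\<forall>i\<in>{1..m}. \<forall>j\<in>{1..m}. \<delta> \<le> mpow m p K i j"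
    using ergodic_mpow_uniformly_pos[OF erg \<open>m \<ge> 1\<close>] by blast
  define v where "v a = \<pi>' a - \<pi> a" for a
  have "(\<Sum>a\<in>{1..m}. v a) = 0"
    using stat stat' unfolding v_def stationary_dist_def by (simp add: sum_subtractf)
  moreover have "norm1 m (vecmat m v (mpow m p K)) = norm1 m v"
    unfolding norm1_def vecmat_def v_def
    using stationary_dist_mpow[OF stat] stationary_dist_mpow[OF stat']
    by (intro sum.cong) (simp_all add: left_diff_distrib sum_subtractf)
  ultimately have "norm1 m v \<le> (1 - real m * \<delta>) * norm1 m v"
    using doeblin_contraction[OF K mpow_row_sum[OF st]] by metis
  then have "norm1 m v \<le> 0"
    using \<open>\<delta> > 0\<close> \<open>m \<ge> 1\<close> by (simp add: algebra_simps mult_le_0_iff)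
  then show ?thesis using abs_le_norm1[OF a, of v] unfolding v_def by simp
qed

lemma stationary_dist_pos:
  assumes "ergodic_chain m p" "m \<ge> 1" "stationary_dist m p \<pi>" "a \<in> {1..m}"
  shows "\<pi> a > 0"
proof -
  obtain K \<delta> where "\<delta> > 0" and K: "\<forall>i\<in>{1..m}. \<forall>j\<in>{1..m}. \<delta> \<le> mpow m p K i j"
    using ergodic_mpow_uniformly_pos[OF assms(1,2)] by blast
  have "\<delta> = (\<Sum>c\<in>{1..m}. \<pi> c * \<delta>)"
    using assms(3) unfolding stationary_dist_def by (simp add: sum_distrib_right[symmetric])
  also have "\<dots> \<le> (\<Sum>c\<in>{1..m}. \<pi> c * mpow m p K c a)"
    using assms(3,4) K unfolding stationary_dist_def by (intro sum_mono mult_left_mono) auto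
  also have "\<dots> = \<pi> a" using stationary_dist_mpow[OF assms(3,4)] .
  finally show ?thesis using \<open>\<delta> > 0\<close> by simp
qed

lemma mpow_deviation_contraction:
  assumes st: "stochastic m p" and stat: "stationary_dist m p \<pi>"
    and K: "\<forall>i\<in>{1..m}. \<forall>j\<in>{1..m}. \<delta> \<le> mpow m p K i j" and b: "b \<in> {1..m}"
  shows "norm1 m (\<lambda>a. mpow m p (k + K) b a - \<pi> a)
    \<le> (1 - real m * \<delta>) * norm1 m (\<lambda>a. mpow m p k b a - \<pi> a)"
proof -
  define u where "u a = mpow m p k b a - \<pi> a" for a
  have "norm1 m (\<lambda>a. mpow m p (k + K) b a - \<pi> a) = norm1 m (vecmat m u (mpow m p K))"
    unfolding norm1_def vecmat_def u_def
  proof (intro sum.cong refl)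
    fix a assume "a \<in> {1..m}"
    then show "\<bar>mpow m p (k + K) b a - \<pi> a\<bar> = \<bar>\<Sum>l\<in>{1..m}. (mpow m p k b l - \<pi> l) * mpow m p K l a\<bar>"
      using mpow_add[of a m p k K b] stationary_dist_mpow[OF stat, of a K]
      by (simp add: left_diff_distrib sum_subtractf)
  qed
  also have "\<dots> \<le> (1 - real m * \<delta>) * norm1 m u"
  proof (rule doeblin_contraction[OF K mpow_row_sum[OF st]])
    show "(\<Sum>a\<in>{1..m}. u a) = 0"
      using mpow_row_sum[OF st b] stat unfolding u_def stationary_dist_def by (simp add: sum_subtractf)
  qed
  finally show ?thesis unfolding u_def .
qed

lemma mpow_deviation_le_2:
  assumes "stochastic m p" "stationary_dist m p \<pi>" "b \<in> {1..m}"
  shows "norm1 m (\<lambda>a. mpow m p k b a - \<pi> a) \<le> 2"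
proof -
  have "norm1 m (\<lambda>a. mpow m p k b a - \<pi> a) \<le> (\<Sum>a\<in>{1..m}. mpow m p k b a + \<pi> a)"
    unfolding norm1_def
  proof (rule sum_mono)
    fix a assume "a \<in> {1..m}"
    then have "0 \<le> mpow m p k b a" "0 \<le> \<pi> a"
      using mpow_nonneg[OF assms(1)] assms(2) unfolding stationary_dist_def by auto
    then show "\<bar>mpow m p k b a - \<pi> a\<bar> \<le> mpow m p k b a + \<pi> a" by (simp add: abs_le_iff)
  qed
  also have "\<dots> = 2"
    using mpow_row_sum[OF assms(1,3)] assms(2) unfolding stationary_dist_def by (simp add: sum.distrib)
  finally show ?thesis .
qed

lemma sum_power_div_le:
  fixes \<rho> :: real
  assumes "0 \<le> \<rho>" "\<rho> < 1" "K \<ge> 1"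
  shows "(\<Sum>k<L. \<rho> ^ (k div K)) \<le> real K / (1 - \<rho>)"
proof -
  have blocks: "(\<Sum>k<q * K. \<rho> ^ (k div K)) = real K * (\<Sum>i<q. \<rho> ^ i)" for q
  proof (induction q)
    case (Suc q)
    have "(\<Sum>k\<in>{q * K..<q * K + K}. \<rho> ^ (k div K)) = (\<Sum>k\<in>{q * K..<q * K + K}. \<rho> ^ q)"
    proof (intro sum.cong refl)
      fix k assume "k \<in> {q * K..<q * K + K}"
      then have "k div K = q" by (intro div_nat_eqI) (auto simp: algebra_simps)
      then show "\<rho> ^ (k div K) = \<rho> ^ q" by simp
    qed
    moreover have "(\<Sum>k<Suc q * K. \<rho> ^ (k div K))
        = (\<Sum>k<q * K. \<rho> ^ (k div K)) + (\<Sum>k\<in>{q * K..<q * K + K}. \<rho> ^ (k div K))"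
      by (simp add: lessThan_atLeast0 add.commute sum.atLeastLessThan_concat)
    ultimately show ?case using Suc by (simp add: algebra_simps)
  qed simp
  have "(\<Sum>k<L. \<rho> ^ (k div K)) \<le> (\<Sum>k<L * K. \<rho> ^ (k div K))"
    using assms by (intro sum_mono2) auto
  also have "\<dots> = real K * ((1 - \<rho> ^ L) / (1 - \<rho>))"
    unfolding blocks using assms by (simp add: sum_gp_strict)
  also have "\<dots> \<le> real K * (1 / (1 - \<rho>))"
    using assms by (intro mult_left_mono divide_right_mono) auto
  finally show ?thesis by simp
qed

lemma ergodic_mpow_deviation_sum_bounded:
  assumes erg: "ergodic_chain m p" and "m \<ge> 1" and stat: "stationary_dist m p \<pi>"
  shows "\<exists>C. \<forall>b\<in>{1..m}. \<forall>a\<in>{1..m}. \<forall>L. (\<Sum>k<L. \<bar>mpow m p k b a - \<pi> a\<bar>) \<le> C"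
proof -
  have st: "stochastic m p" using erg unfolding ergodic_chain_def by simp
  obtain K \<delta> where "K \<ge> 1" "\<delta> > 0" and K: "\<forall>i\<in>{1..m}. \<forall>j\<in>{1..m}. \<delta> \<le> mpow m p K i j"
    using ergodic_mpow_uniformly_pos[OF erg \<open>m \<ge> 1\<close>] by blast
  define \<rho> where "\<rho> = 1 - real m * \<delta>"
  have \<rho>: "0 \<le> \<rho>" "\<rho> < 1"
    unfolding \<rho>_def using doeblin_rate_bounds[OF st \<open>m \<ge> 1\<close> K \<open>\<delta> > 0\<close>] by auto
  have "(\<Sum>k<L. \<bar>mpow m p k b a - \<pi> a\<bar>) \<le> 2 * real K / (1 - \<rho>)"
    if b: "b \<in> {1..m}" and a: "a \<in> {1..m}" for b a L
  proof -
    define d where "d k = norm1 m (\<lambda>a. mpow m p k b a - \<pi> a)" for k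
    have d_blocks: "d (r + q * K) \<le> 2 * \<rho> ^ q" for r q
    proof (induction q)
      case 0
      show ?case using mpow_deviation_le_2[OF st stat b] unfolding d_def by simp
    next
      case (Suc q)
      have "d (r + Suc q * K) \<le> \<rho> * d (r + q * K)"
        using mpow_deviation_contraction[OF st stat K b, of "r + q * K"]
        unfolding d_def \<rho>_def by (simp add: algebra_simps)
      also have "\<dots> \<le> \<rho> * (2 * \<rho> ^ q)" using Suc \<rho> by (intro mult_left_mono) auto
      finally show ?case by simp
    qed
    have "(\<Sum>k<L. \<bar>mpow m p k b a - \<pi> a\<bar>) \<le> (\<Sum>k<L. 2 * \<rho> ^ (k div K))"
    proof (rule sum_mono)
      fix k
      have "\<bar>mpow m p k b a - \<pi> a\<bar> \<le> d k"
        unfolding d_def using abs_le_norm1[OF a, of "\<lambda>a. mpow m p k b a - \<pi> a"] .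
      also have "\<dots> \<le> 2 * \<rho> ^ (k div K)"
        using d_blocks[of "k mod K" "k div K"] by simp
      finally show "\<bar>mpow m p k b a - \<pi> a\<bar> \<le> 2 * \<rho> ^ (k div K)" .
    qed
    also have "\<dots> \<le> 2 * (real K / (1 - \<rho>))"
      unfolding sum_distrib_left[symmetric] using sum_power_div_le[OF \<rho> \<open>K \<ge> 1\<close>, of L] by simp
    finally show ?thesis by simp
  qed
  then show ?thesis by blast
qed

section \<open>Path expectations and the Markov property\<close>

definition determined_by_prefix :: "nat \<Rightarrow> ((nat \<Rightarrow> nat) \<Rightarrow> real) \<Rightarrow> bool" where
  "determined_by_prefix r g \<longleftrightarrow> (\<forall>x y. (\<forall>t\<in>{1..r}. x t = y t) \<longrightarrow> g x = g y)"

lemma determined_by_prefix_mono: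
  "determined_by_prefix r g \<Longrightarrow> r \<le> L \<Longrightarrow> determined_by_prefix L g"
  unfolding determined_by_prefix_def by auto

lemma paths_memD: "x \<in> paths n L \<Longrightarrow> t \<in> {1..L} \<Longrightarrow> x t \<in> {1..n}"
  unfolding paths_def by auto

lemma sum_paths_Suc:
  "(\<Sum>x\<in>paths n (Suc L). F x) = (\<Sum>x\<in>paths n L. \<Sum>y\<in>{1..n}. F (x(Suc L := y)))"
proof -
  have eq: "paths n (Suc L) = (\<lambda>(y, x). x(Suc L := y)) ` ({1..n} \<times> paths n L)"
    unfolding paths_def by (simp add: atLeastAtMostSuc_conv PiE_insert_eq)
  have inj: "inj_on (\<lambda>(y, x). x(Suc L := y)) ({1..n} \<times> paths n L)"
    unfolding paths_def using inj_combinator[of "Suc L" "{1..L}" "\<lambda>_. {1..n}"] by simp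
  have "(\<Sum>x\<in>paths n (Suc L). F x) = (\<Sum>(y, x)\<in>{1..n} \<times> paths n L. F (x(Suc L := y)))"
    unfolding eq by (subst sum.reindex[OF inj]) (simp add: case_prod_unfold)
  also have "\<dots> = (\<Sum>y\<in>{1..n}. \<Sum>x\<in>paths n L. F (x(Suc L := y)))"
    by (simp add: sum.cartesian_product)
  also have "\<dots> = (\<Sum>x\<in>paths n L. \<Sum>y\<in>{1..n}. F (x(Suc L := y)))"
    by (rule sum.swap)
  finally show ?thesis .
qed

lemma sum_paths_1: "(\<Sum>x\<in>paths n 1. F x) = (\<Sum>y\<in>{1..n}. F ((\<lambda>_. undefined)(1 := y)))"
proof -
  have "paths n 0 = {\<lambda>_. undefined}" unfolding paths_def by simp
  then show ?thesis using sum_paths_Suc[of F n 0] by (simp add: fun_upd_def)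
qed

lemma path_weight_fun_upd_Suc:
  assumes "L \<ge> 1"
  shows "path_weight (Suc L) P PX (x(Suc L := y)) = path_weight L P PX x * P (x L) y"
proof -
  have "(\<Prod>t\<in>{1..<Suc L}. P ((x(Suc L := y)) t) ((x(Suc L := y)) (Suc t)))
      = (\<Prod>t\<in>{1..<L}. P ((x(Suc L := y)) t) ((x(Suc L := y)) (Suc t))) * P (x L) y"
    using assms by (subst prod.atLeastLessThan_Suc) auto
  also have "(\<Prod>t\<in>{1..<L}. P ((x(Suc L := y)) t) ((x(Suc L := y)) (Suc t)))
      = (\<Prod>t\<in>{1..<L}. P (x t) (x (Suc t)))"
    by (intro prod.cong) auto
  finally show ?thesis using assms unfolding path_weight_def by simp
qed

lemma expect_mult_const: "expect n L P PX (\<lambda>x. f x * c) = expect n L P PX f * c"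
  unfolding expect_def by (simp add: sum_distrib_right mult.assoc)

lemma expect_sum: "expect n L P PX (\<lambda>x. \<Sum>t\<in>T. f t x) = (\<Sum>t\<in>T. expect n L P PX (f t))"
  unfolding expect_def by (simp add: sum_distrib_left) (rule sum.swap)

lemma expect_split_state:
  assumes "t \<in> {1..L}"
  shows "expect n L P PX (\<lambda>x. g x * h (x t))
    = (\<Sum>b\<in>{1..n}. expect n L P PX (\<lambda>x. g x * of_bool (x t = b)) * h b)"
proof -
  have "g x * h (x t) = (\<Sum>b\<in>{1..n}. g x * of_bool (x t = b) * h b)" if "x \<in> paths n L" for x
  proof -
    have "(\<Sum>b\<in>{1..n}. g x * of_bool (x t = b) * h b) = (\<Sum>b\<in>{1..n}. if b = x t then g x * h b else 0)"
      by (intro sum.cong) auto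
    then show ?thesis using paths_memD[OF that assms] by simp
  qed
  then have "expect n L P PX (\<lambda>x. g x * h (x t))
      = expect n L P PX (\<lambda>x. \<Sum>b\<in>{1..n}. g x * of_bool (x t = b) * h b)"
    unfolding expect_def by (intro sum.cong refl) simp
  also have "\<dots> = (\<Sum>b\<in>{1..n}. expect n L P PX (\<lambda>x. g x * of_bool (x t = b) * h b))"
    by (rule expect_sum)
  finally show ?thesis by (simp only: expect_mult_const)
qed

lemma expect_Suc_last:
  assumes "L \<ge> 1" "determined_by_prefix L g"
  shows "expect n (Suc L) P PX (\<lambda>x. g x * h (x (Suc L)))
    = expect n L P PX (\<lambda>x. g x * (\<Sum>c\<in>{1..n}. P (x L) c * h c))"
proof -
  have "g (x(Suc L := y)) = g x" for x y
    using assms(2) unfolding determined_by_prefix_def by auto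
  then have "expect n (Suc L) P PX (\<lambda>x. g x * h (x (Suc L)))
      = (\<Sum>x\<in>paths n L. \<Sum>y\<in>{1..n}. path_weight L P PX x * (g x * (P (x L) y * h y)))"
    unfolding expect_def sum_paths_Suc path_weight_fun_upd_Suc[OF assms(1)] by (simp add: mult_ac)
  then show ?thesis unfolding expect_def by (simp add: sum_distrib_left)
qed

lemma expect_add: "expect n L P PX (\<lambda>x. f x + g x) = expect n L P PX f + expect n L P PX g"
  unfolding expect_def by (simp add: distrib_left sum.distrib)

lemma expect_diff: "expect n L P PX (\<lambda>x. f x - g x) = expect n L P PX f - expect n L P PX g"
  unfolding expect_def by (simp add: right_diff_distrib sum_subtractf)

lemma expect_divide_const: "expect n L P PX (\<lambda>x. f x / d) = expect n L P PX f / d"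
  unfolding expect_def by (simp add: sum_divide_distrib)

lemma expect_const:
  assumes "expect n L P PX (\<lambda>_. 1) = 1"
  shows "expect n L P PX (\<lambda>_. c) = c"
  using expect_mult_const[of n L P PX "\<lambda>_. 1" c] assms by simp

lemma variance_eq_expect_sq_minus:
  assumes "expect n L P PX (\<lambda>_. 1) = 1"
  shows "variance n L P PX f = expect n L P PX (\<lambda>x. (f x)\<^sup>2) - (expect n L P PX f)\<^sup>2"
proof -
  define \<mu> where "\<mu> = expect n L P PX f"
  have "(f x - \<mu>)\<^sup>2 = ((f x)\<^sup>2 - f x * (2 * \<mu>)) + \<mu>\<^sup>2" for x
    by (simp add: power2_eq_square algebra_simps)
  then have "variance n L P PX f = expect n L P PX (\<lambda>x. ((f x)\<^sup>2 - f x * (2 * \<mu>)) + \<mu>\<^sup>2)"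
    unfolding variance_def \<mu>_def[symmetric] by simp
  also have "\<dots> = expect n L P PX (\<lambda>x. (f x)\<^sup>2) - \<mu> * (2 * \<mu>) + \<mu>\<^sup>2"
    unfolding expect_add expect_diff expect_mult_const expect_const[OF assms] \<mu>_def ..
  finally show ?thesis unfolding \<mu>_def by (simp add: power2_eq_square)
qed

lemma variance_affine:
  assumes "expect n L P PX (\<lambda>_. 1) = 1"
  shows "variance n L P PX (\<lambda>x. (f x - c) / d) = variance n L P PX f / d\<^sup>2"
proof -
  define \<mu> where "\<mu> = expect n L P PX f"
  have "expect n L P PX (\<lambda>x. (f x - c) / d) = (\<mu> - c) / d"
    unfolding expect_divide_const expect_diff expect_const[OF assms] \<mu>_def ..
  then have "variance n L P PX (\<lambda>x. (f x - c) / d)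
      = expect n L P PX (\<lambda>x. ((f x - c) / d - (\<mu> - c) / d)\<^sup>2)"
    unfolding variance_def by simp
  also have "\<dots> = expect n L P PX (\<lambda>x. (f x - \<mu>)\<^sup>2 / d\<^sup>2)"
    by (simp add: power_divide diff_divide_distrib[symmetric])
  finally show ?thesis unfolding variance_def \<mu>_def expect_divide_const .
qed

lemma Ncount_eq_sum: "Ncount L i j x = (\<Sum>t\<in>{1..<L}. of_bool (x t = i) * of_bool (x (Suc t) = j))"
proof -
  have "Ncount L i j x = (\<Sum>t\<in>{1..<L}. if x t = i \<and> x (Suc t) = j then 1 else 0)"
    unfolding Ncount_def real_of_card by (subst sum.inter_filter) auto
  also have "\<dots> = (\<Sum>t\<in>{1..<L}. of_bool (x t = i) * of_bool (x (Suc t) = j))"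
    by (intro sum.cong) auto
  finally show ?thesis .
qed

locale markov_chain =
  fixes n :: nat and P :: "nat \<Rightarrow> nat \<Rightarrow> real" and PX :: "nat \<Rightarrow> real"
  assumes row_sum: "\<And>i. i \<in> {1..n} \<Longrightarrow> (\<Sum>j\<in>{1..n}. P i j) = 1"
begin

abbreviation E :: "nat \<Rightarrow> ((nat \<Rightarrow> nat) \<Rightarrow> real) \<Rightarrow> real" where
  "E L \<equiv> expect n L P PX"

lemma expect_marginal:
  assumes "1 \<le> r" "r \<le> L" "determined_by_prefix r g"
  shows "E L g = E r g"
  using assms(2)
proof (induction L rule: dec_induct)
  case (step L)
  have "determined_by_prefix L g" using determined_by_prefix_mono[OF assms(3) step(1)] .
  then have "E (Suc L) (\<lambda>x. g x * (\<lambda>_. 1) (x (Suc L))) = E L (\<lambda>x. g x * (\<Sum>c\<in>{1..n}. P (x L) c * 1))"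
    using assms(1) step(1) by (intro expect_Suc_last) auto
  also have "\<dots> = E L (\<lambda>x. g x * 1)"
    unfolding expect_def
  proof (intro sum.cong refl)
    fix x assume "x \<in> paths n L"
    then have "x L \<in> {1..n}" using paths_memD assms(1) step(1) by simp
    then show "path_weight L P PX x * (g x * (\<Sum>c\<in>{1..n}. P (x L) c * 1))
        = path_weight L P PX x * (g x * 1)"
      using row_sum by simp
  qed
  finally show ?case using step(3) by simp
qed simp

lemma expect_markov:
  assumes g: "determined_by_prefix r g" and "1 \<le> r" "r + k \<le> L" and "c \<in> {1..n}"
  shows "E L (\<lambda>x. g x * of_bool (x r = a) * of_bool (x (r + k) = c))
    = E r (\<lambda>x. g x * of_bool (x r = a)) * mpow n P k a c"
proof -
  define G where "G x = g x * of_bool (x r = a)" for x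
  have G: "determined_by_prefix r G"
    using g \<open>1 \<le> r\<close> unfolding determined_by_prefix_def G_def by auto
  have "E (r + k) (\<lambda>x. G x * of_bool (x (r + k) = c)) = E r G * mpow n P k a c"
    using \<open>c \<in> {1..n}\<close>
  proof (induction k arbitrary: c)
    case 0
    have "E r (\<lambda>x. G x * of_bool (x r = c)) = E r (\<lambda>x. G x * of_bool (a = c))"
      unfolding expect_def G_def by (intro sum.cong refl) auto
    then show ?case by (simp add: expect_mult_const)
  next
    case (Suc k)
    have Gk: "determined_by_prefix (r + k) G" using determined_by_prefix_mono[OF G] by simp
    have "E (r + Suc k) (\<lambda>x. G x * of_bool (x (r + Suc k) = c))
        = E (r + k) (\<lambda>x. G x * (\<Sum>b\<in>{1..n}. P (x (r + k)) b * of_bool (b = c)))"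
      using expect_Suc_last[OF _ Gk, of n P PX "\<lambda>y. of_bool (y = c)"] \<open>1 \<le> r\<close> by simp
    also have "\<dots> = E (r + k) (\<lambda>x. G x * P (x (r + k)) c)"
      using Suc.prems by simp
    also have "\<dots> = (\<Sum>b\<in>{1..n}. E (r + k) (\<lambda>x. G x * of_bool (x (r + k) = b)) * P b c)"
      using \<open>1 \<le> r\<close> by (intro expect_split_state) simp
    also have "\<dots> = (\<Sum>b\<in>{1..n}. E r G * mpow n P k a b * P b c)"
      using Suc.IH by simp
    also have "\<dots> = E r G * mpow n P (Suc k) a c"
      by (simp add: sum_distrib_left mult.assoc)
    finally show ?case .
  qed
  moreover have "E L (\<lambda>x. G x * of_bool (x (r + k) = c)) = E (r + k) (\<lambda>x. G x * of_bool (x (r + k) = c))"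
    using G \<open>1 \<le> r\<close> \<open>r + k \<le> L\<close>
    by (intro expect_marginal) (auto simp: determined_by_prefix_def)
  ultimately show ?thesis unfolding G_def by simp
qed

end

section \<open>Moments of transition counts\<close>

lemma sum_inj_on_le:
  fixes f :: "nat \<Rightarrow> real"
  assumes "inj_on h S" "h ` S \<subseteq> {..<L}" "\<And>k. 0 \<le> f k"
  shows "(\<Sum>s\<in>S. f (h s)) \<le> (\<Sum>k<L. f k)"
proof -
  have "(\<Sum>s\<in>S. f (h s)) = (\<Sum>k\<in>h ` S. f k)" by (simp add: sum.reindex[OF assms(1)])
  also have "\<dots> \<le> (\<Sum>k<L. f k)" using assms by (intro sum_mono2) auto
  finally show ?thesis .
qed

lemma sum_gap_le:
  fixes f :: "nat \<Rightarrow> real"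
  assumes "\<And>k. 0 \<le> f k" "t \<in> {1..<L}"
  shows "(\<Sum>s\<in>{1..<L} - {t}. f (max t s - Suc (min t s))) \<le> 2 * (\<Sum>k<L. f k)"
proof -
  define A B where "A = {s\<in>{1..<L}. t < s}" and "B = {s\<in>{1..<L}. s < t}"
  have "{1..<L} - {t} = A \<union> B" unfolding A_def B_def by auto
  moreover have "finite A" "finite B" "A \<inter> B = {}" unfolding A_def B_def by auto
  ultimately have "(\<Sum>s\<in>{1..<L} - {t}. f (max t s - Suc (min t s)))
      = (\<Sum>s\<in>A. f (max t s - Suc (min t s))) + (\<Sum>s\<in>B. f (max t s - Suc (min t s)))"
    by (simp add: sum.union_disjoint)
  also have "\<dots> \<le> (\<Sum>k<L. f k) + (\<Sum>k<L. f k)"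
  proof (rule add_mono)
    have "(\<Sum>s\<in>A. f (max t s - Suc (min t s))) = (\<Sum>s\<in>A. f (s - Suc t))"
      by (intro sum.cong) (auto simp: A_def)
    also have "\<dots> \<le> (\<Sum>k<L. f k)"
      using assms by (intro sum_inj_on_le inj_on_diff_nat) (auto simp: A_def)
    finally show "(\<Sum>s\<in>A. f (max t s - Suc (min t s))) \<le> (\<Sum>k<L. f k)" .
    have "(\<Sum>s\<in>B. f (max t s - Suc (min t s))) = (\<Sum>s\<in>B. f (t - Suc s))"
      by (intro sum.cong) (auto simp: B_def)
    also have "\<dots> \<le> (\<Sum>k<L. f k)"
    proof (rule sum_inj_on_le)
      show "inj_on (\<lambda>s. t - Suc s) B" by (rule inj_onI) (auto simp: B_def)
    qed (use assms in \<open>auto simp: B_def\<close>)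
    finally show "(\<Sum>s\<in>B. f (max t s - Suc (min t s))) \<le> (\<Sum>k<L. f k)" .
  qed
  finally show ?thesis by simp
qed

locale stationary_markov_chain = markov_chain +
  assumes stationary: "stationary_dist n P PX"
begin

lemma expect_state:
  assumes "1 \<le> t" "t \<le> L" "i \<in> {1..n}"
  shows "E L (\<lambda>x. of_bool (x t = i)) = PX i"
proof -
  have "E t (\<lambda>x. of_bool (x t = i)) = PX i" if "t \<ge> 1" "i \<in> {1..n}" for t i
    using that
  proof (induction t arbitrary: i rule: dec_induct)
    case base
    then show ?case unfolding expect_def sum_paths_1 by (simp add: path_weight_def)
  next
    case (step t)
    have "E (Suc t) (\<lambda>x. 1 * of_bool (x (Suc t) = i)) = E t (\<lambda>x. 1 * (\<Sum>c\<in>{1..n}. P (x t) c * of_bool (c = i)))"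
      using step(1) by (intro expect_Suc_last) (auto simp: determined_by_prefix_def)
    also have "\<dots> = E t (\<lambda>x. 1 * P (x t) i)" using step.prems by simp
    also have "\<dots> = (\<Sum>b\<in>{1..n}. PX b * P b i)"
      using step by (subst expect_split_state) auto
    also have "\<dots> = PX i" using stationary step.prems unfolding stationary_dist_def by simp
    finally show ?case by simp
  qed
  moreover have "E L (\<lambda>x. of_bool (x t = i)) = E t (\<lambda>x. of_bool (x t = i))"
    using assms by (intro expect_marginal) (auto simp: determined_by_prefix_def)
  ultimately show ?thesis using assms by simp
qed

lemma expect_one:
  assumes "L \<ge> 1"
  shows "E L (\<lambda>_. 1) = 1"
proof -
  have "E L (\<lambda>x. 1 * (\<lambda>_. 1) (x L)) = (\<Sum>b\<in>{1..n}. E L (\<lambda>x. 1 * of_bool (x L = b)) * 1)"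
    using assms by (intro expect_split_state) simp
  also have "\<dots> = (\<Sum>b\<in>{1..n}. PX b)" using expect_state assms by simp
  finally show ?thesis using stationary unfolding stationary_dist_def by simp
qed

lemma expect_transition:
  assumes "1 \<le> t" "Suc t \<le> L" "i \<in> {1..n}" "j \<in> {1..n}"
  shows "E L (\<lambda>x. of_bool (x t = i) * of_bool (x (Suc t) = j)) = PX i * P i j"
proof -
  have "E L (\<lambda>x. 1 * of_bool (x t = i) * of_bool (x (t + 1) = j))
      = E t (\<lambda>x. 1 * of_bool (x t = i)) * mpow n P 1 i j"
    using assms by (intro expect_markov) (auto simp: determined_by_prefix_def)
  then show ?thesis using expect_state[of t t i] assms by (simp add: mpow_1)
qed

lemma expect_two_transitions:
  assumes "1 \<le> t" "t < s" "Suc s \<le> L" "i \<in> {1..n}" "j \<in> {1..n}"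
  shows "E L (\<lambda>x. of_bool (x t = i) * of_bool (x (Suc t) = j) * (of_bool (x s = i) * of_bool (x (Suc s) = j)))
    = PX i * P i j * mpow n P (s - Suc t) j i * P i j"
proof -
  have "E L (\<lambda>x. (of_bool (x t = i) * of_bool (x (Suc t) = j)) * of_bool (x s = i) * of_bool (x (s + 1) = j))
      = E s (\<lambda>x. (of_bool (x t = i) * of_bool (x (Suc t) = j)) * of_bool (x s = i)) * mpow n P 1 i j"
    using assms by (intro expect_markov) (auto simp: determined_by_prefix_def)
  moreover have "E s (\<lambda>x. of_bool (x t = i) * of_bool (x (Suc t) = j) * of_bool (x (Suc t + (s - Suc t)) = i))
      = E (Suc t) (\<lambda>x. of_bool (x t = i) * of_bool (x (Suc t) = j)) * mpow n P (s - Suc t) j i"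
    using assms by (intro expect_markov) (auto simp: determined_by_prefix_def)
  moreover have "E (Suc t) (\<lambda>x. of_bool (x t = i) * of_bool (x (Suc t) = j)) = PX i * P i j"
    using assms by (intro expect_transition) auto
  ultimately show ?thesis using assms by (simp add: mpow_1 mult_ac)
qed

lemma expect_Ncount:
  assumes "i \<in> {1..n}" "j \<in> {1..n}"
  shows "E L (Ncount L i j) = real (L - 1) * (PX i * P i j)"
proof -
  have "E L (Ncount L i j) = (\<Sum>t\<in>{1..<L}. E L (\<lambda>x. of_bool (x t = i) * of_bool (x (Suc t) = j)))"
    unfolding Ncount_eq_sum by (rule expect_sum)
  also have "\<dots> = (\<Sum>t\<in>{1..<L}. PX i * P i j)"
    using expect_transition assms by (intro sum.cong refl) auto
  finally show ?thesis by simp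
qed

lemma expect_transition_pair:
  assumes "t \<in> {1..<L}" "s \<in> {1..<L}" "i \<in> {1..n}" "j \<in> {1..n}"
  shows "E L (\<lambda>x. of_bool (x t = i) * of_bool (x (Suc t) = j) * (of_bool (x s = i) * of_bool (x (Suc s) = j)))
    = PX i * P i j * (if t = s then 1 else mpow n P (max t s - Suc (min t s)) j i * P i j)"
proof (cases t s rule: linorder_cases)
  case less
  then show ?thesis using expect_two_transitions[of t s L i j] assms by simp
next
  case equal
  then show ?thesis using expect_transition[of t L i j] assms by (simp add: of_bool_conj[symmetric])
next
  case greater
  then show ?thesis using expect_two_transitions[of s t L i j] assms by (simp add: mult_ac)
qed

lemma expect_Ncount_sq:
  assumes "i \<in> {1..n}" "j \<in> {1..n}"
  shows "E L (\<lambda>x. (Ncount L i j x)\<^sup>2) = (\<Sum>t\<in>{1..<L}. \<Sum>s\<in>{1..<L}.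
    PX i * P i j * (if t = s then 1 else mpow n P (max t s - Suc (min t s)) j i * P i j))"
proof -
  have "E L (\<lambda>x. (Ncount L i j x)\<^sup>2) = E L (\<lambda>x. \<Sum>t\<in>{1..<L}. \<Sum>s\<in>{1..<L}.
      of_bool (x t = i) * of_bool (x (Suc t) = j) * (of_bool (x s = i) * of_bool (x (Suc s) = j)))"
    unfolding Ncount_eq_sum power2_eq_square sum_product ..
  also have "\<dots> = (\<Sum>t\<in>{1..<L}. \<Sum>s\<in>{1..<L}.
      E L (\<lambda>x. of_bool (x t = i) * of_bool (x (Suc t) = j) * (of_bool (x s = i) * of_bool (x (Suc s) = j))))"
    by (simp only: expect_sum)
  also have "\<dots> = (\<Sum>t\<in>{1..<L}. \<Sum>s\<in>{1..<L}.
      PX i * P i j * (if t = s then 1 else mpow n P (max t s - Suc (min t s)) j i * P i j))"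
    using expect_transition_pair[OF _ _ assms] by (intro sum.cong refl) blast
  finally show ?thesis .
qed

lemma variance_Ncount_eq:
  assumes ij: "i \<in> {1..n}" "j \<in> {1..n}" and "L \<ge> 1"
  shows "variance n L P PX (Ncount L i j) - real (L - 1) * (PX i * P i j)
    = (\<Sum>t\<in>{1..<L}. PX i * P i j * P i j
        * (\<Sum>s\<in>{1..<L} - {t}. mpow n P (max t s - Suc (min t s)) j i - PX i) - (PX i * P i j)\<^sup>2)"
proof -
  define q where "q = PX i * P i j"
  define T where "T = {1..<L}"
  define c where "c t s = q * (if t = s then 1 else mpow n P (max t s - Suc (min t s)) j i * P i j)" for t s
  have "variance n L P PX (Ncount L i j) = (\<Sum>t\<in>T. \<Sum>s\<in>T. c t s) - (real (L - 1) * q)\<^sup>2"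
    unfolding variance_eq_expect_sq_minus[OF expect_one[OF \<open>L \<ge> 1\<close>]] expect_Ncount_sq[OF ij]
      expect_Ncount[OF ij] c_def q_def T_def ..
  moreover have "(\<Sum>t\<in>T. (\<Sum>s\<in>T. c t s - q\<^sup>2) - q)
      = (\<Sum>t\<in>T. \<Sum>s\<in>T. c t s) - real (L - 1) * real (L - 1) * q\<^sup>2 - real (L - 1) * q"
    using \<open>L \<ge> 1\<close> by (simp add: T_def sum_subtractf of_nat_diff)
  moreover have "(\<Sum>s\<in>T. c t s - q\<^sup>2) - q
      = q * P i j * (\<Sum>s\<in>T - {t}. mpow n P (max t s - Suc (min t s)) j i - PX i) - q\<^sup>2"
    if "t \<in> T" for t
  proof -
    have "(\<Sum>s\<in>T. c t s - q\<^sup>2) = (c t t - q\<^sup>2) + (\<Sum>s\<in>T - {t}. c t s - q\<^sup>2)"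
      using that by (simp add: T_def sum.remove)
    \<comment> \<open>as \<open>q\<^sup>2 = q * P i j * PX i\<close>, each off-diagonal term measures how far
      \<open>P^k(j,i)\<close> is from its limit \<open>PX i\<close>\<close>
    also have "(\<Sum>s\<in>T - {t}. c t s - q\<^sup>2)
        = q * P i j * (\<Sum>s\<in>T - {t}. mpow n P (max t s - Suc (min t s)) j i - PX i)"
      unfolding sum_distrib_left
      by (intro sum.cong) (auto simp: c_def q_def power2_eq_square algebra_simps)
    finally show ?thesis by (simp add: c_def)
  qed
  ultimately show ?thesis
    unfolding T_def q_def by (simp add: power_mult_distrib power2_eq_square)
qed

lemma variance_Ncount_bound:
  assumes ij: "i \<in> {1..n}" "j \<in> {1..n}" and "L \<ge> 1" "0 \<le> PX i" "0 \<le> P i j"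
  shows "\<bar>variance n L P PX (Ncount L i j) - real (L - 1) * (PX i * P i j)\<bar>
    \<le> real (L - 1) * ((PX i * P i j)\<^sup>2 + 2 * (PX i * P i j) * P i j * (\<Sum>k<L. \<bar>mpow n P k j i - PX i\<bar>))"
proof -
  define q where "q = PX i * P i j"
  define S where "S = (\<Sum>k<L. \<bar>mpow n P k j i - PX i\<bar>)"
  define X where "X t = (\<Sum>s\<in>{1..<L} - {t}. mpow n P (max t s - Suc (min t s)) j i - PX i)" for t
  have "0 \<le> q" unfolding q_def using assms by simp
  have "\<bar>q * P i j * X t - q\<^sup>2\<bar> \<le> q\<^sup>2 + 2 * q * P i j * S" if "t \<in> {1..<L}" for t
  proof -
    have "\<bar>X t\<bar> \<le> 2 * S"
      unfolding X_def S_def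
      using order_trans[OF sum_abs sum_gap_le[of "\<lambda>k. \<bar>mpow n P k j i - PX i\<bar>" t L]] that by simp
    then have "q * P i j * \<bar>X t\<bar> \<le> q * P i j * (2 * S)"
      using \<open>0 \<le> q\<close> \<open>0 \<le> P i j\<close> by (intro mult_left_mono) auto
    moreover have "\<bar>q * P i j * X t - q\<^sup>2\<bar> \<le> q * P i j * \<bar>X t\<bar> + q\<^sup>2"
      using \<open>0 \<le> q\<close> \<open>0 \<le> P i j\<close> abs_triangle_ineq4[of "q * P i j * X t" "q\<^sup>2"] by (simp add: abs_mult)
    ultimately show ?thesis by linarith
  qed
  then have "\<bar>\<Sum>t\<in>{1..<L}. q * P i j * X t - q\<^sup>2\<bar> \<le> (\<Sum>t\<in>{1..<L}. q\<^sup>2 + 2 * q * P i j * S)"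
    by (intro order_trans[OF sum_abs] sum_mono) auto
  then show ?thesis
    unfolding variance_Ncount_eq[OF ij \<open>L \<ge> 1\<close>] by (simp add: q_def S_def X_def)
qed

lemma variance_Qhat:
  assumes "L \<ge> 1" "0 \<le> PX i" "0 \<le> PX j"
  shows "variance n L P PX (Qhat n L P PX i j)
    = variance n L P PX (Ncount L i j) / ((real L + 1)\<^sup>2 * PX i * PX j)"
proof -
  have "Qhat n L P PX i j = (\<lambda>x. (Ncount L i j x - E L (Ncount L i j))
      / (sqrt ((real L + 1) * PX i) * sqrt ((real L + 1) * PX j)))"
    unfolding Qhat_def ..
  moreover have "(sqrt ((real L + 1) * PX i) * sqrt ((real L + 1) * PX j))\<^sup>2 = (real L + 1)\<^sup>2 * PX i * PX j"
    using assms by (simp add: power_mult_distrib power2_eq_square[of "real L + 1"])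
  ultimately show ?thesis using variance_affine[OF expect_one[OF assms(1)]] by simp
qed

lemma variance_Qhat_bound:
  assumes ij: "i \<in> {1..n}" "j \<in> {1..n}" and "L \<ge> 1" "0 < PX i" "0 < PX j" "0 \<le> P i j"
  shows "\<bar>variance n L P PX (Qhat n L P PX i j) - real (L - 1) / (real L + 1)\<^sup>2 * (P i j / PX j)\<bar>
    \<le> real (L - 1) / (real L + 1)\<^sup>2 * (P i j / PX j) * P i j * (PX i + 2 * (\<Sum>k<L. \<bar>mpow n P k j i - PX i\<bar>))"
proof -
  define D where "D = (real L + 1)\<^sup>2 * PX i * PX j"
  define V where "V = variance n L P PX (Ncount L i j)"
  define S where "S = (\<Sum>k<L. \<bar>mpow n P k j i - PX i\<bar>)"
  have "D > 0" unfolding D_def using assms by simp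
  have "variance n L P PX (Qhat n L P PX i j) - real (L - 1) / (real L + 1)\<^sup>2 * (P i j / PX j)
      = (V - real (L - 1) * (PX i * P i j)) / D"
    unfolding variance_Qhat[OF \<open>L \<ge> 1\<close> less_imp_le less_imp_le, OF assms(4,5)] V_def[symmetric] D_def
    using assms by (simp add: field_simps)
  moreover have "\<bar>V - real (L - 1) * (PX i * P i j)\<bar> / D
      \<le> real (L - 1) * ((PX i * P i j)\<^sup>2 + 2 * (PX i * P i j) * P i j * S) / D"
    using variance_Ncount_bound[OF ij \<open>L \<ge> 1\<close>] assms \<open>D > 0\<close>
    unfolding V_def S_def by (intro divide_right_mono) auto
  \<comment> \<open>stated for an arbitrary \<open>M\<close> to keep the simplifier from splitting on \<open>L = 1\<close>\<close>
  moreover have "M * ((PX i * P i j)\<^sup>2 + 2 * (PX i * P i j) * P i j * S) / D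
      = M / (real L + 1)\<^sup>2 * (P i j / PX j) * P i j * (PX i + 2 * S)" for M
    unfolding D_def using assms by (simp add: divide_simps power2_eq_square) algebra
  ultimately show ?thesis using \<open>D > 0\<close> unfolding S_def by simp
qed

end

lemma abs_rescaled_le:
  fixes V A r E c lam :: real
  assumes "\<bar>V - A * r\<bar> \<le> A * r * E" "0 \<le> c" "0 \<le> r"
  shows "\<bar>c * V - r / lam\<bar> \<le> (\<bar>c * A - 1 / lam\<bar> + c * A * E) * r"
proof -
  have "\<bar>c * V - r / lam\<bar> \<le> \<bar>c * V - c * A * r\<bar> + \<bar>c * A * r - r / lam\<bar>"
    using abs_triangle_ineq[of "c * V - c * A * r" "c * A * r - r / lam"] by simp
  also have "\<bar>c * V - c * A * r\<bar> = c * \<bar>V - A * r\<bar>"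
    using assms(2) by (simp add: abs_mult mult.assoc flip: right_diff_distrib)
  also have "c * A * r - r / lam = (c * A - 1 / lam) * r"
    by (simp add: left_diff_distrib)
  also have "\<bar>(c * A - 1 / lam) * r\<bar> = \<bar>c * A - 1 / lam\<bar> * r"
    using assms(3) by (simp add: abs_mult)
  finally show ?thesis
    using mult_left_mono[OF assms(1,2)] by (simp add: algebra_simps)
qed

section \<open>Block Markov chains\<close>

locale block_chain =
  fixes n m :: nat and \<sigma> :: "nat \<Rightarrow> nat" and p :: "nat \<Rightarrow> nat \<Rightarrow> real"
  assumes block_range: "\<And>i. i \<in> {1..n} \<Longrightarrow> \<sigma> i \<in> {1..m}"
    and block_nonempty: "\<And>k. k \<in> {1..m} \<Longrightarrow> {v\<in>{1..n}. \<sigma> v = k} \<noteq> {}"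
    and stochastic: "stochastic m p"
begin

definition block :: "nat \<Rightarrow> nat set" where
  "block k = {v\<in>{1..n}. \<sigma> v = k}"

definition block_size :: "nat \<Rightarrow> real" where
  "block_size k = real (card (block k))"

lemma block_size_ge_1: "k \<in> {1..m} \<Longrightarrow> 1 \<le> block_size k"
  using block_nonempty unfolding block_size_def block_def
  by (simp add: Suc_le_eq card_gt_0_iff)

lemma block_P_eq: "block_P n \<sigma> p i j = p (\<sigma> i) (\<sigma> j) / block_size (\<sigma> j)"
  unfolding block_P_def block_size_def block_def ..

lemma sum_over_blocks: "(\<Sum>l\<in>{1..n}. h l) = (\<Sum>c\<in>{1..m}. \<Sum>l\<in>block c. h l)"
proof -
  have "\<sigma> ` {1..n} \<subseteq> {1..m}" using block_range by auto
  then show ?thesis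
    unfolding block_def using sum.group[OF finite_atLeastAtMost finite_atLeastAtMost, of \<sigma> 1 n 1 m h]
    by simp
qed

lemma sum_block_const: "k \<in> {1..m} \<Longrightarrow> (\<Sum>l\<in>block k. x / block_size k) = x"
  using block_size_ge_1[of k] unfolding block_size_def by simp

lemma sum_over_blocks_normalized: "(\<Sum>l\<in>{1..n}. f (\<sigma> l) / block_size (\<sigma> l)) = (\<Sum>c\<in>{1..m}. f c)"
proof -
  have "(\<Sum>l\<in>{1..n}. f (\<sigma> l) / block_size (\<sigma> l)) = (\<Sum>c\<in>{1..m}. \<Sum>l\<in>block c. f c / block_size c)"
    unfolding sum_over_blocks by (intro sum.cong refl) (auto simp: block_def)
  also have "\<dots> = (\<Sum>c\<in>{1..m}. f c)" using sum_block_const by simp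
  finally show ?thesis .
qed

lemma block_P_row_sum: "i \<in> {1..n} \<Longrightarrow> (\<Sum>j\<in>{1..n}. block_P n \<sigma> p i j) = 1"
  unfolding block_P_eq sum_over_blocks_normalized[of "p (\<sigma> i)"]
  using stochastic block_range unfolding stochastic_def by simp

lemma mpow_block_P:
  assumes "k \<ge> 1" "j \<in> {1..n}" "i \<in> {1..n}"
  shows "mpow n (block_P n \<sigma> p) k j i = mpow m p k (\<sigma> j) (\<sigma> i) / block_size (\<sigma> i)"
  using assms(1,3)
proof (induction k arbitrary: i rule: dec_induct)
  case base
  show ?case
    unfolding mpow_1[OF assms(2)] mpow_1[OF block_range[OF assms(2)]] block_P_eq ..
next
  case (step k)
  have "mpow n (block_P n \<sigma> p) (Suc k) j i = (\<Sum>l\<in>{1..n}. mpow n (block_P n \<sigma> p) k j l * block_P n \<sigma> p l i)"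
    by simp
  also have "\<dots> = (\<Sum>l\<in>{1..n}. (mpow m p k (\<sigma> j) (\<sigma> l) * p (\<sigma> l) (\<sigma> i) / block_size (\<sigma> i)) / block_size (\<sigma> l))"
    using step.IH by (intro sum.cong refl) (simp add: block_P_eq[of _ i])
  also have "\<dots> = (\<Sum>c\<in>{1..m}. mpow m p k (\<sigma> j) c * p c (\<sigma> i) / block_size (\<sigma> i))"
    by (rule sum_over_blocks_normalized)
  finally show ?case by (simp add: sum_divide_distrib)
qed

end

locale ergodic_block_chain = block_chain +
  fixes \<pi> PX :: "nat \<Rightarrow> real"
  assumes ergodic: "ergodic_chain m p" and m_pos: "m \<ge> 1"
    and stationary_pi: "stationary_dist m p \<pi>"
    and stationary_PX: "stationary_dist n (block_P n \<sigma> p) PX"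
begin

sublocale stationary_markov_chain n "block_P n \<sigma> p" PX
  by unfold_locales (use block_P_row_sum stationary_PX in auto)

text \<open>Lumping the block chain along \<open>\<sigma>\<close> gives a stationary distribution of \<open>p\<close>, which must be \<open>\<pi>\<close>.\<close>

lemma block_stationary_dist_eq:
  assumes i: "i \<in> {1..n}"
  shows "PX i = \<pi> (\<sigma> i) / block_size (\<sigma> i)"
proof -
  define \<rho> where "\<rho> c = (\<Sum>l\<in>block c. PX l)" for c
  have PX: "PX i' = (\<Sum>c\<in>{1..m}. \<rho> c * p c (\<sigma> i')) / block_size (\<sigma> i')" if "i' \<in> {1..n}" for i'
  proof -
    have "PX i' = (\<Sum>l\<in>{1..n}. PX l * block_P n \<sigma> p l i')"
      using stationary_PX that unfolding stationary_dist_def by simp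
    also have "\<dots> = (\<Sum>c\<in>{1..m}. \<Sum>l\<in>block c. PX l * (p c (\<sigma> i') / block_size (\<sigma> i')))"
      unfolding sum_over_blocks block_P_eq by (intro sum.cong refl) (auto simp: block_def)
    finally show ?thesis unfolding \<rho>_def by (simp add: sum_distrib_right sum_divide_distrib)
  qed
  have "stationary_dist m p \<rho>"
    unfolding stationary_dist_def
  proof (intro conjI ballI)
    show "0 \<le> \<rho> c" for c
      unfolding \<rho>_def using stationary_PX unfolding stationary_dist_def block_def by (intro sum_nonneg) auto
    show "(\<Sum>c\<in>{1..m}. \<rho> c) = 1"
      unfolding \<rho>_def sum_over_blocks[symmetric] using stationary_PX unfolding stationary_dist_def by simp
  next
    fix a assume a: "a \<in> {1..m}"
    have "\<rho> a = (\<Sum>l\<in>block a. (\<Sum>c\<in>{1..m}. \<rho> c * p c a) / block_size a)"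
      unfolding \<rho>_def[of a] using PX by (intro sum.cong refl) (auto simp: block_def)
    then show "(\<Sum>c\<in>{1..m}. \<rho> c * p c a) = \<rho> a" using sum_block_const[OF a] by simp
  qed
  then have "\<rho> c = \<pi> c" if "c \<in> {1..m}" for c
    using stationary_dist_unique[OF ergodic m_pos stationary_pi _ that] by blast
  then show ?thesis
    using PX[OF i] stationary_pi block_range[OF i] unfolding stationary_dist_def by simp
qed

lemma block_stationary_dist_bounds:
  assumes "i \<in> {1..n}"
  shows "0 < PX i" "PX i \<le> 1"
proof -
  have "0 < \<pi> (\<sigma> i)" "\<pi> (\<sigma> i) \<le> 1" "1 \<le> block_size (\<sigma> i)"
    using stationary_dist_pos[OF ergodic m_pos stationary_pi] block_range[OF assms]
      block_size_ge_1 stationary_pi member_le_sum[of "\<sigma> i" "{1..m}" \<pi>]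
    unfolding stationary_dist_def by auto
  then show "0 < PX i" "PX i \<le> 1"
    unfolding block_stationary_dist_eq[OF assms] by (simp_all add: divide_le_eq)
qed

lemma block_mpow_deviation_sum_le:
  assumes i: "i \<in> {1..n}" and j: "j \<in> {1..n}"
    and C: "\<forall>b\<in>{1..m}. \<forall>a\<in>{1..m}. \<forall>L. (\<Sum>k<L. \<bar>mpow m p k b a - \<pi> a\<bar>) \<le> C"
  shows "(\<Sum>k<L. \<bar>mpow n (block_P n \<sigma> p) k j i - PX i\<bar>) \<le> 1 + C"
proof -
  have "(\<Sum>k<L. \<bar>mpow n (block_P n \<sigma> p) k j i - PX i\<bar>)
      \<le> (\<Sum>k<L. of_bool (k = 0) + \<bar>mpow m p k (\<sigma> j) (\<sigma> i) - \<pi> (\<sigma> i)\<bar>)"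
  proof (rule sum_mono)
    fix k
    show "\<bar>mpow n (block_P n \<sigma> p) k j i - PX i\<bar>
        \<le> of_bool (k = 0) + \<bar>mpow m p k (\<sigma> j) (\<sigma> i) - \<pi> (\<sigma> i)\<bar>"
    proof (cases "k = 0")
      case True
      then show ?thesis using block_stationary_dist_bounds[OF i] by auto
    next
      case False
      have bs: "1 \<le> block_size (\<sigma> i)" using block_size_ge_1 block_range[OF i] by simp
      then have "\<bar>mpow m p k (\<sigma> j) (\<sigma> i) - \<pi> (\<sigma> i)\<bar> / block_size (\<sigma> i)
          \<le> \<bar>mpow m p k (\<sigma> j) (\<sigma> i) - \<pi> (\<sigma> i)\<bar>"
        by (simp add: divide_le_eq mult_le_cancel_left1)
      moreover have "mpow n (block_P n \<sigma> p) k j i - PX i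
          = (mpow m p k (\<sigma> j) (\<sigma> i) - \<pi> (\<sigma> i)) / block_size (\<sigma> i)"
        using False mpow_block_P[OF _ j i] block_stationary_dist_eq[OF i] by (simp add: diff_divide_distrib)
      ultimately show ?thesis using False bs by simp
    qed
  qed
  also have "\<dots> = (\<Sum>k<L. of_bool (k = 0)) + (\<Sum>k<L. \<bar>mpow m p k (\<sigma> j) (\<sigma> i) - \<pi> (\<sigma> i)\<bar>)"
    by (rule sum.distrib)
  also have "\<dots> \<le> 1 + C"
  proof (rule add_mono)
    show "(\<Sum>k<L. of_bool (k = 0)) \<le> (1::real)"
      using card_mono[of "{0::nat}" "{..<L} \<inter> {0}"] by simp
    show "(\<Sum>k<L. \<bar>mpow m p k (\<sigma> j) (\<sigma> i) - \<pi> (\<sigma> i)\<bar>) \<le> C"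
      using C block_range[OF i] block_range[OF j] by simp
  qed
  finally show ?thesis .
qed

lemma block_transition_bounds:
  assumes i: "i \<in> {1..n}" and j: "j \<in> {1..n}"
  shows "block_P n \<sigma> p i j / PX j = p (\<sigma> i) (\<sigma> j) / \<pi> (\<sigma> j)"
    and "0 \<le> block_P n \<sigma> p i j" "block_P n \<sigma> p i j \<le> 1 / block_size (\<sigma> j)"
proof -
  have "1 \<le> block_size (\<sigma> j)" "0 < \<pi> (\<sigma> j)" "0 \<le> p (\<sigma> i) (\<sigma> j)" "p (\<sigma> i) (\<sigma> j) \<le> 1"
    using block_range[OF i] block_range[OF j] block_size_ge_1 stochastic_le_1[OF stochastic]
      stationary_dist_pos[OF ergodic m_pos stationary_pi] stochastic
    unfolding stochastic_def by auto
  then show "block_P n \<sigma> p i j / PX j = p (\<sigma> i) (\<sigma> j) / \<pi> (\<sigma> j)"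
    and "0 \<le> block_P n \<sigma> p i j" "block_P n \<sigma> p i j \<le> 1 / block_size (\<sigma> j)"
    unfolding block_P_eq block_stationary_dist_eq[OF j] by (simp_all add: divide_right_mono)
qed

lemma block_variance_Qhat_bound:
  assumes i: "i \<in> {1..n}" and j: "j \<in> {1..n}" and "L \<ge> 1"
    and C: "\<forall>b\<in>{1..m}. \<forall>a\<in>{1..m}. \<forall>L. (\<Sum>k<L. \<bar>mpow m p k b a - \<pi> a\<bar>) \<le> C"
  shows "\<bar>variance n L (block_P n \<sigma> p) PX (Qhat n L (block_P n \<sigma> p) PX i j)
      - real (L - 1) / (real L + 1)\<^sup>2 * (p (\<sigma> i) (\<sigma> j) / \<pi> (\<sigma> j))\<bar>
    \<le> real (L - 1) / (real L + 1)\<^sup>2 * (p (\<sigma> i) (\<sigma> j) / \<pi> (\<sigma> j)) * ((3 + 2 * C) / block_size (\<sigma> j))"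
proof -
  define S where "S = (\<Sum>k<L. \<bar>mpow n (block_P n \<sigma> p) k j i - PX i\<bar>)"
  have PX: "0 < PX i" "PX i \<le> 1" "0 < PX j" using block_stationary_dist_bounds i j by auto
  have "0 \<le> PX i + 2 * S" "PX i + 2 * S \<le> 3 + 2 * C"
    using block_mpow_deviation_sum_le[OF i j C, of L] PX unfolding S_def by (auto intro!: sum_nonneg)
  then have "block_P n \<sigma> p i j * (PX i + 2 * S) \<le> 1 / block_size (\<sigma> j) * (3 + 2 * C)"
    using block_transition_bounds(2,3)[OF i j] by (intro mult_mono) (auto simp: block_size_def)
  then have "block_P n \<sigma> p i j * (PX i + 2 * S) \<le> (3 + 2 * C) / block_size (\<sigma> j)"
    by simp
  moreover have "0 \<le> real (L - 1) / (real L + 1)\<^sup>2 * (p (\<sigma> i) (\<sigma> j) / \<pi> (\<sigma> j))"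
    unfolding block_transition_bounds(1)[OF i j, symmetric] using block_transition_bounds(2)[OF i j] PX(3) by simp
  ultimately have "real (L - 1) / (real L + 1)\<^sup>2 * (p (\<sigma> i) (\<sigma> j) / \<pi> (\<sigma> j)) * block_P n \<sigma> p i j * (PX i + 2 * S)
      \<le> real (L - 1) / (real L + 1)\<^sup>2 * (p (\<sigma> i) (\<sigma> j) / \<pi> (\<sigma> j)) * ((3 + 2 * C) / block_size (\<sigma> j))"
    unfolding mult.assoc[of _ "block_P n \<sigma> p i j"] by (rule mult_left_mono)
  then show ?thesis
    using variance_Qhat_bound[OF i j \<open>L \<ge> 1\<close> PX(1,3) block_transition_bounds(2)[OF i j]]
    unfolding block_transition_bounds(1)[OF i j] S_def[symmetric] by linarith
qed

lemma scaled_block_variance_Qhat_bound: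
  assumes i: "i \<in> {1..n}" and j: "j \<in> {1..n}" and "L \<ge> 1" "0 \<le> c"
    and C: "\<forall>b\<in>{1..m}. \<forall>a\<in>{1..m}. \<forall>L. (\<Sum>k<L. \<bar>mpow m p k b a - \<pi> a\<bar>) \<le> C"
  shows "\<bar>c * variance n L (block_P n \<sigma> p) PX (Qhat n L (block_P n \<sigma> p) PX i j)
      - p (\<sigma> i) (\<sigma> j) / (lam * \<pi> (\<sigma> j))\<bar>
    \<le> (\<bar>c * real (L - 1) / (real L + 1)\<^sup>2 - 1 / lam\<bar>
        + c * real (L - 1) / (real L + 1)\<^sup>2 * (3 + 2 * C) * (\<Sum>b\<in>{1..m}. 1 / block_size b))
      * (\<Sum>b\<in>{1..m}. 1 / \<pi> b)"
proof -
  define A where "A = real (L - 1) / (real L + 1)\<^sup>2"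
  define r where "r = p (\<sigma> i) (\<sigma> j) / \<pi> (\<sigma> j)"
  have \<sigma>: "\<sigma> i \<in> {1..m}" "\<sigma> j \<in> {1..m}" using block_range i j by auto
  have r_lam: "p (\<sigma> i) (\<sigma> j) / (lam * \<pi> (\<sigma> j)) = r / lam" unfolding r_def by simp
  have p: "0 \<le> p (\<sigma> i) (\<sigma> j)" "p (\<sigma> i) (\<sigma> j) \<le> 1" and "0 < \<pi> (\<sigma> j)"
    using stochastic \<sigma> stochastic_le_1[OF stochastic \<sigma>] stationary_dist_pos[OF ergodic m_pos stationary_pi \<sigma>(2)]
    unfolding stochastic_def by auto
  then have "0 \<le> r" unfolding r_def by simp
  have "r \<le> 1 / \<pi> (\<sigma> j)" unfolding r_def using p \<open>0 < \<pi> (\<sigma> j)\<close> by (simp add: divide_right_mono)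
  also have "\<dots> \<le> (\<Sum>b\<in>{1..m}. 1 / \<pi> b)"
    using \<sigma>(2) stationary_dist_pos[OF ergodic m_pos stationary_pi]
    by (intro member_le_sum) (auto simp: less_imp_le)
  finally have r: "0 \<le> r" "r \<le> (\<Sum>b\<in>{1..m}. 1 / \<pi> b)" using \<open>0 \<le> r\<close> by auto
  have "1 / block_size (\<sigma> j) \<le> (\<Sum>b\<in>{1..m}. 1 / block_size b)"
    using \<sigma>(2) by (intro member_le_sum) (auto simp: block_size_def)
  then have "(3 + 2 * C) / block_size (\<sigma> j) \<le> (3 + 2 * C) * (\<Sum>b\<in>{1..m}. 1 / block_size b)"
    using mult_left_mono[of _ _ "3 + 2 * C"] C[rule_format, OF \<sigma>(2,2), of 0] by fastforce
  moreover have "0 \<le> (3 + 2 * C) * (\<Sum>b\<in>{1..m}. 1 / block_size b)"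
    using C[rule_format, OF \<sigma>(2,2), of 0]
    by (intro mult_nonneg_nonneg sum_nonneg) (auto simp: block_size_def)
  moreover have "0 \<le> c * A" unfolding A_def using \<open>0 \<le> c\<close> by simp
  ultimately have bound: "(\<bar>c * A - 1 / lam\<bar> + c * A * ((3 + 2 * C) / block_size (\<sigma> j))) * r
      \<le> (\<bar>c * A - 1 / lam\<bar> + c * A * ((3 + 2 * C) * (\<Sum>b\<in>{1..m}. 1 / block_size b))) * (\<Sum>b\<in>{1..m}. 1 / \<pi> b)"
    using r by (intro mult_mono add_left_mono mult_left_mono) auto
  have "\<bar>c * variance n L (block_P n \<sigma> p) PX (Qhat n L (block_P n \<sigma> p) PX i j) - r / lam\<bar>
      \<le> (\<bar>c * A - 1 / lam\<bar> + c * A * ((3 + 2 * C) / block_size (\<sigma> j))) * r"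
    using block_variance_Qhat_bound[OF i j \<open>L \<ge> 1\<close> C] \<open>0 \<le> c\<close> r
    unfolding A_def r_def[symmetric] by (intro abs_rescaled_le) auto
  also note bound
  finally show ?thesis unfolding A_def r_lam by (simp add: mult.assoc)
qed

end

section \<open>Asymptotics\<close>

lemma tendsto_ratio_of_smallo:
  fixes f g :: "nat \<Rightarrow> real"
  assumes "(\<lambda>n. f n - c * g n) \<in> o(g)" "eventually (\<lambda>n. g n \<noteq> 0) sequentially"
  shows "(\<lambda>n. f n / g n) \<longlonglongrightarrow> c"
proof -
  have "(\<lambda>n. (f n - c * g n) / g n + c) \<longlonglongrightarrow> 0 + c"
    using smalloD_tendsto[OF assms(1)] by (intro tendsto_add) auto
  moreover have "eventually (\<lambda>n. (f n - c * g n) / g n + c = f n / g n) sequentially"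
    using assms(2) by eventually_elim (simp add: diff_divide_distrib)
  ultimately show ?thesis by (simp add: Lim_transform_eventually)
qed

lemma inverse_tendsto_0_of_smallo_linear:
  fixes N :: "nat \<Rightarrow> real"
  assumes "(\<lambda>n. N n - \<alpha> * real n) \<in> o(\<lambda>n. real n)" "\<alpha> > 0"
  shows "(\<lambda>n. 1 / N n) \<longlonglongrightarrow> 0"
proof -
  have "eventually (\<lambda>n. real n \<noteq> 0) sequentially"
    using eventually_gt_at_top[of 0] by eventually_elim simp
  then have "(\<lambda>n. N n / real n) \<longlonglongrightarrow> \<alpha>"
    using tendsto_ratio_of_smallo[OF assms(1)] by simp
  then have "(\<lambda>n. (1 / real n) / (N n / real n)) \<longlonglongrightarrow> 0 / \<alpha>"
    using assms(2) by (intro tendsto_divide lim_inverse_n') auto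
  moreover have "eventually (\<lambda>n. (1 / real n) / (N n / real n) = 1 / N n) sequentially"
    using eventually_gt_at_top[of 0] by eventually_elim simp
  ultimately show ?thesis by (simp add: Lim_transform_eventually)
qed

lemma quadratic_length_asymptotics:
  fixes l :: "nat \<Rightarrow> nat"
  assumes "(\<lambda>n. real (l n) - lam * (real n)\<^sup>2) \<in> o(\<lambda>n. (real n)\<^sup>2)" "lam > 0"
  shows "eventually (\<lambda>n. 1 \<le> l n) sequentially"
    and "(\<lambda>n. (real n)\<^sup>2 * real (l n - 1) / (real (l n) + 1)\<^sup>2) \<longlonglongrightarrow> 1 / lam"
proof -
  have n0: "eventually (\<lambda>n. (real n)\<^sup>2 \<noteq> 0) sequentially"
    using eventually_gt_at_top[of 0] by eventually_elim simp
  have ratio: "(\<lambda>n. real (l n) / (real n)\<^sup>2) \<longlonglongrightarrow> lam"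
    using tendsto_ratio_of_smallo[OF assms(1) n0] .
  have "eventually (\<lambda>n. 0 < real (l n) / (real n)\<^sup>2) sequentially"
    using order_tendstoD(1)[OF ratio assms(2)] .
  then show l1: "eventually (\<lambda>n. 1 \<le> l n) sequentially"
  proof eventually_elim
    case (elim n)
    then have "l n \<noteq> 0" by (metis div_0 less_irrefl of_nat_0)
    then show ?case by simp
  qed
  have inv: "(\<lambda>n. 1 / (real n)\<^sup>2) \<longlonglongrightarrow> 0"
    using tendsto_mult[OF lim_inverse_n' lim_inverse_n'] by (simp add: power2_eq_square)
  have "(\<lambda>n. (real (l n) / (real n)\<^sup>2 - 1 / (real n)\<^sup>2) / (real (l n) / (real n)\<^sup>2 + 1 / (real n)\<^sup>2)\<^sup>2)
      \<longlonglongrightarrow> (lam - 0) / (lam + 0)\<^sup>2"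
    using assms(2) by (intro tendsto_intros ratio inv) auto
  moreover have "eventually (\<lambda>n. (real (l n) / (real n)\<^sup>2 - 1 / (real n)\<^sup>2) / (real (l n) / (real n)\<^sup>2 + 1 / (real n)\<^sup>2)\<^sup>2
      = (real n)\<^sup>2 * real (l n - 1) / (real (l n) + 1)\<^sup>2) sequentially"
    using n0 l1
  proof eventually_elim
    case (elim n)
    define N x where "N = (real n)\<^sup>2" and "x = real (l n)"
    have "N > 0" "x + 1 > 0" using elim(1) unfolding N_def x_def by auto
    have "x / N - 1 / N = (x - 1) / N" "x / N + 1 / N = (x + 1) / N"
      by (simp_all add: diff_divide_distrib add_divide_distrib)
    then have "(x / N - 1 / N) / (x / N + 1 / N)\<^sup>2 = ((x - 1) / N) / ((x + 1)\<^sup>2 / N\<^sup>2)"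
      by (simp only: power_divide)
    also have "\<dots> = N * (x - 1) / (x + 1)\<^sup>2"
      using \<open>N > 0\<close> \<open>x + 1 > 0\<close> by (simp add: divide_simps power2_eq_square)
    finally show ?case
      using elim(2) unfolding N_def[symmetric] x_def[symmetric] by (simp add: of_nat_diff x_def)
  qed
  ultimately show "(\<lambda>n. (real n)\<^sup>2 * real (l n - 1) / (real (l n) + 1)\<^sup>2) \<longlonglongrightarrow> 1 / lam"
    using assms(2) by (simp add: Lim_transform_eventually power2_eq_square)
qed

lemma Max_abs_tendsto_0:
  fixes f :: "nat \<Rightarrow> nat \<Rightarrow> nat \<Rightarrow> real"
  assumes "R \<longlonglongrightarrow> 0" and "eventually (\<lambda>n. \<forall>i\<in>{1..n}. \<forall>j\<in>{1..n}. \<bar>f n i j\<bar> \<le> R n) sequentially"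
  shows "(\<lambda>n. Max {\<bar>f n i j\<bar> | i j. i \<in> {1..n} \<and> j \<in> {1..n}}) \<longlonglongrightarrow> 0"
proof (rule tendsto_sandwich[OF _ _ tendsto_const assms(1)])
  define M where "M n = {\<bar>f n i j\<bar> | i j. i \<in> {1..n} \<and> j \<in> {1..n}}" for n
  have fin: "finite (M n)" for n unfolding M_def by (rule finite_image_set2) auto
  have ne: "M n \<noteq> {}" if "n \<ge> 1" for n unfolding M_def using that by auto
  show "eventually (\<lambda>n. 0 \<le> Max (M n)) sequentially"
    using eventually_ge_at_top[of 1]
  proof eventually_elim
    case (elim n)
    then obtain y where "y \<in> M n" using ne by blast
    moreover have "0 \<le> y" using \<open>y \<in> M n\<close> unfolding M_def by auto
    ultimately show ?case using Max_ge[OF fin] order_trans by blast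
  qed
  show "eventually (\<lambda>n. Max (M n) \<le> R n) sequentially"
    using eventually_ge_at_top[of 1] assms(2)
    by eventually_elim (use fin ne in \<open>auto simp: Max_le_iff M_def\<close>)
qed

theorem lemma2:
  fixes m :: nat and p :: "nat \<Rightarrow> nat \<Rightarrow> real" and \<pi> :: "nat \<Rightarrow> real"
    and \<alpha> :: "nat \<Rightarrow> real" and lam :: real
    and \<sigma> :: "nat \<Rightarrow> nat \<Rightarrow> nat" and l :: "nat \<Rightarrow> nat"
    and PiX :: "nat \<Rightarrow> nat \<Rightarrow> real"
  assumes "m \<ge> 1"
    and "ergodic_chain m p"
    and "stationary_dist m p \<pi>"
    and "\<forall>k\<in>{1..m}. \<alpha> k > 0" and "(\<Sum>k\<in>{1..m}. \<alpha> k) = 1"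
    and "lam > 0"
    and "eventually (\<lambda>n. (\<forall>i\<in>{1..n}. \<sigma> n i \<in> {1..m}) \<and>
                          (\<forall>k\<in>{1..m}. {i\<in>{1..n}. \<sigma> n i = k} \<noteq> {})) sequentially"
    and "\<forall>k\<in>{1..m}. (\<lambda>n. real (card {i\<in>{1..n}. \<sigma> n i = k}) - \<alpha> k * real n) \<in> o(\<lambda>n. real n)"
    and "(\<lambda>n. real (l n) - lam * (real n)^2) \<in> o(\<lambda>n. (real n)^2)"
    and "eventually (\<lambda>n. stationary_dist n (block_P n (\<sigma> n) p) (PiX n)) sequentially"
  shows "(\<lambda>n. Max {\<bar>(real n)^2 * variance n (l n) (block_P n (\<sigma> n) p) (PiX n)
                         (Qhat n (l n) (block_P n (\<sigma> n) p) (PiX n) i j)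
                      - p (\<sigma> n i) (\<sigma> n j) / (lam * \<pi> (\<sigma> n j))\<bar> | i j. i \<in> {1..n} \<and> j \<in> {1..n}})
         \<longlonglongrightarrow> 0"
proof -
  \<comment> \<open>of the block proportions \<open>\<alpha>\<close> only the positivity is used, not their normalisation\<close>
  obtain C where C: "\<forall>b\<in>{1..m}. \<forall>a\<in>{1..m}. \<forall>L. (\<Sum>k<L. \<bar>mpow m p k b a - \<pi> a\<bar>) \<le> C"
    using ergodic_mpow_deviation_sum_bounded[OF assms(2,1,3)] by blast
  define A where "A n = (real n)\<^sup>2 * real (l n - 1) / (real (l n) + 1)\<^sup>2" for n
  define W where "W n = (\<Sum>k\<in>{1..m}. 1 / real (card {i\<in>{1..n}. \<sigma> n i = k}))" for n
  define R where "R n = (\<bar>A n - 1 / lam\<bar> + A n * (3 + 2 * C) * W n) * (\<Sum>b\<in>{1..m}. 1 / \<pi> b)" for n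
  have "A \<longlonglongrightarrow> 1 / lam"
    unfolding A_def using quadratic_length_asymptotics(2)[OF assms(9,6)] .
  moreover have "W \<longlonglongrightarrow> 0"
    unfolding W_def using assms(4,8) by (intro tendsto_null_sum inverse_tendsto_0_of_smallo_linear) auto
  ultimately have "R \<longlonglongrightarrow> 0"
    unfolding R_def by (auto intro!: tendsto_eq_intros)
  moreover have "eventually (\<lambda>n. \<forall>i\<in>{1..n}. \<forall>j\<in>{1..n}.
      \<bar>(real n)^2 * variance n (l n) (block_P n (\<sigma> n) p) (PiX n) (Qhat n (l n) (block_P n (\<sigma> n) p) (PiX n) i j)
        - p (\<sigma> n i) (\<sigma> n j) / (lam * \<pi> (\<sigma> n j))\<bar> \<le> R n) sequentially"
    using assms(7,10) quadratic_length_asymptotics(1)[OF assms(9,6)]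
  proof eventually_elim
    case (elim n)
    then interpret ergodic_block_chain n m "\<sigma> n" p \<pi> "PiX n"
      using assms(1-3) by unfold_locales (auto simp: ergodic_chain_def)
    show ?case
      using scaled_block_variance_Qhat_bound[OF _ _ elim(3) _ C, of _ _ "(real n)\<^sup>2"]
      unfolding R_def A_def W_def block_size_def block_def by auto
  qed
  ultimately show ?thesis by (rule Max_abs_tendsto_0)
qed

end
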